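(* Let $\sigma$ be an erasing $k$-block substitution with $w_\epsilon\ne1^k$ that satisfies the optimality condition. Then there exists a Lebesgue-measurable set $\Gamma\subset\mathbb I$ (in fact of Lebesgue measure $0$) such that $f_\sigma(\Gamma)$ is not Lebesgue measurable.
   Context: Notation: $\mathbb I=[0,1]$. $\{0,1\}^*$ and $\{0,1\}^\omega$ denote finite and infinite binary words, and $\epsilon$ is the empty word. For a word $w$, set $0.w=\sum_iw_i2^{-i}$. For $x\in(0,1]$, $\widetilde x$ is the unique infinite binary expansion of $x$ not ending in $0^\infty$. Fix $k\ge2$. An erasing $k$-block substitution is a map $\sigma:\{0,1\}^k\to\{0,1\}^*$ with exactly one block $w_\epsilon$ such that $\sigma(w_\epsilon)=\epsilon$. It acts blockwise on infinite words, concatenating the images of consecutive $k$-blocks. The map $f_\sigma:\mathbb I\to\mathbb I$ is defined by $f_\sigma(x)=0.\sigma(\widetilde x)$ if $x\in(0,1]$ and $\widetilde x\neq w_\epsilon^\infty$, and $f_\sigma(x)=0$ otherwise. Optimality condition: every $w\in\{0,1\}^\omega$ can be written as $w=\prod_{i\ge1}\sigma(b_i)$ with blocks $b_i\in\{0,1\}^k$ satisfying $\sigma(b_i)\ne\epsilon$. *)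

theory Defs
  imports "HOL-Analysis.Analysis"
begin

text \<open>Binary letters are booleans (True = 1, False = 0). Finite words are lists,
infinite words are functions nat \<Rightarrow> bool (letter w_1 is w 0).\<close>

definition binval :: "(nat \<Rightarrow> bool) \<Rightarrow> real" where
  "binval w = (\<Sum>i. (if w i then 1 else 0) / 2 ^ (Suc i))"

definition finval :: "bool list \<Rightarrow> real" where
  "finval u = (\<Sum>i<length u. (if u ! i then 1 else 0) / 2 ^ (Suc i))"

definition tilde :: "real \<Rightarrow> (nat \<Rightarrow> bool)" where
  "tilde x = (THE w. binval w = x \<and> (\<exists>\<^sub>\<infinity>i. w i))"

definition block :: "nat \<Rightarrow> (nat \<Rightarrow> bool) \<Rightarrow> nat \<Rightarrow> bool list" where
  "block k w j = map (\<lambda>i. w (j * k + i)) [0..<k]"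

definition startpos :: "(nat \<Rightarrow> bool list) \<Rightarrow> nat \<Rightarrow> nat" where
  "startpos u j = (\<Sum>i<j. length (u i))"

text \<open>Infinite concatenation of a sequence of nonempty finite words.\<close>
definition concat_inf :: "(nat \<Rightarrow> bool list) \<Rightarrow> nat \<Rightarrow> bool" where
  "concat_inf u n = (let j = (LEAST j. n < startpos u (Suc j)) in u j ! (n - startpos u j))"

text \<open>The value 0.(u_0 u_1 u_2 ...) of the (finite or infinite) concatenation of the
finite words u_j.\<close>
definition concat_val :: "(nat \<Rightarrow> bool list) \<Rightarrow> real" where
  "concat_val u = (\<Sum>j. finval (u j) / 2 ^ startpos u j)"

definition erasing_block_subst :: "nat \<Rightarrow> (bool list \<Rightarrow> bool list) \<Rightarrow> bool list \<Rightarrow> bool" where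
  "erasing_block_subst k \<sigma> we \<longleftrightarrow> length we = k \<and> \<sigma> we = [] \<and>
     (\<forall>b. length b = k \<and> \<sigma> b = [] \<longrightarrow> b = we)"

definition optimal :: "nat \<Rightarrow> (bool list \<Rightarrow> bool list) \<Rightarrow> bool" where
  "optimal k \<sigma> \<longleftrightarrow> (\<forall>w :: nat \<Rightarrow> bool. \<exists>b :: nat \<Rightarrow> bool list.
     (\<forall>i. length (b i) = k \<and> \<sigma> (b i) \<noteq> []) \<and> w = concat_inf (\<lambda>i. \<sigma> (b i)))"

definition periodic_word :: "bool list \<Rightarrow> nat \<Rightarrow> bool" where
  "periodic_word u i = u ! (i mod length u)"

definition f_sigma :: "nat \<Rightarrow> (bool list \<Rightarrow> bool list) \<Rightarrow> bool list \<Rightarrow> real \<Rightarrow> real" where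
  "f_sigma k \<sigma> we x =
     (if 0 < x \<and> x \<le> 1 \<and> tilde x \<noteq> periodic_word we
      then concat_val (\<lambda>j. \<sigma> (block k (tilde x) j)) else 0)"

end

theory Submission
  imports Defs
begin

text \<open>Take a Vitali set \<open>A \<subseteq> (0,1)\<close>. By optimality each \<open>y \<in> A\<close> is \<open>0.\<sigma>(b\<^sub>0)\<sigma>(b\<^sub>1)...\<close>
  with \<open>\<sigma>(b\<^sub>i) \<noteq> \<epsilon>\<close>, and since the block \<open>w\<^sub>\<epsilon>\<close> is erased, \<open>f\<^sub>\<sigma>\<close> maps the point with
  expansion \<open>b\<^sub>0 w\<^sub>\<epsilon> b\<^sub>1 w\<^sub>\<epsilon> ...\<close> back to \<open>y\<close>. These lifts all have \<open>w\<^sub>\<epsilon>\<close> as every odd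
  k-block, so for each n they lie in 2^(kn) intervals of length 2^(-2kn) and form a null set.
  Lebesgue measure is complete, hence the set \<open>\<Gamma>\<close> of lifts is null, while \<open>f\<^sub>\<sigma>(\<Gamma>) = A\<close> is
  not measurable.\<close>

section \<open>Non-measurable sets\<close>

lemma rational_transversal_exists:
  "\<exists>V \<subseteq> {0<..<1::real}.
     (\<forall>x. \<exists>v\<in>V. x - v \<in> \<rat>) \<and> (\<forall>u\<in>V. \<forall>v\<in>V. u - v \<in> \<rat> \<longrightarrow> u = v)"
proof -
  define r where "r x = (SOME y. y \<in> {0<..<1::real} \<and> x - y \<in> \<rat>)" for x :: real
  have r: "r x \<in> {0<..<1} \<and> x - r x \<in> \<rat>" for x
  proof -
    obtain q where "q \<in> \<rat>" "x - 1 < q" "q < x"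
      using Rats_dense_in_real[of "x - 1" x] by auto
    then have "x - q \<in> {0<..<1} \<and> x - (x - q) \<in> \<rat>" by auto
    then show ?thesis unfolding r_def by (rule someI)
  qed
  have r_eq: "r x = r y" if "x - y \<in> \<rat>" for x y
  proof -
    have "x - z \<in> \<rat> \<longleftrightarrow> y - z \<in> \<rat>" for z
      using that Rats_add Rats_diff by (metis add_diff_cancel_left' diff_add_cancel diff_diff_add)
    then show ?thesis unfolding r_def by simp
  qed
  have "r x = r y" if "r x - r y \<in> \<rat>" for x y
  proof (rule r_eq)
    have "x - y = (x - r x) + (r x - r y) - (y - r y)" by simp
    then show "x - y \<in> \<rat>" using r[of x] r[of y] that by (metis Rats_add Rats_diff)
  qed
  moreover have "\<exists>v\<in>range r. x - v \<in> \<rat>" for x using r by blast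
  ultimately show ?thesis using r by (intro exI[of _ "range r"]) auto
qed

lemma negligible_if_rational_translates_disjoint:
  fixes V :: "real set"
  assumes V: "V \<subseteq> {0<..<1}" "V \<in> sets lebesgue"
    and disjoint: "\<And>p q. p \<in> \<rat> \<Longrightarrow> q \<in> \<rat> \<Longrightarrow> p \<noteq> q \<Longrightarrow> (+) p ` V \<inter> (+) q ` V = {}"
  shows "negligible V"
proof (rule ccontr)
  assume "\<not> negligible V"
  have "bounded V" by (rule bounded_subset[OF bounded_closed_interval[of 0 1]]) (use V in auto)
  then have V_fin: "V \<in> lmeasurable" using V(2) by (rule bounded_set_imp_lmeasurable)
  then have "measure lebesgue V > 0"
    using \<open>\<not> negligible V\<close> negligible_iff_measure measure_nonneg by (metis less_eq_real_def)
  then obtain N :: nat where N: "real N * measure lebesgue V > 2"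
    using reals_Archimedean3 by blast
  define F where "F n = (+) (1 / (real n + 2)) ` V" for n
  have F_fin: "F n \<in> lmeasurable" for n
    unfolding F_def using V_fin by (rule measurable_translation)
  have "pairwise (\<lambda>i j. disjnt (F i) (F j)) {..<N}"
  proof (rule pairwiseI)
    fix i j :: nat
    assume "i \<noteq> j"
    then have "1 / (real i + 2) \<noteq> 1 / (real j + 2)" by (simp add: field_simps)
    moreover have "1 / (real n + 2) \<in> \<rat>" for n by simp
    ultimately show "disjnt (F i) (F j)" unfolding F_def disjnt_def by (rule disjoint[rotated 2]) simp_all
  qed
  then have "measure lebesgue (\<Union>n<N. F n) = (\<Sum>n<N. measure lebesgue (F n))"
    by (intro measure_UNION' F_fin) auto
  also have "\<dots> = real N * measure lebesgue V"
    by (simp add: F_def measure_translation)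
  finally have "measure lebesgue (\<Union>n<N. F n) > 2" using N by simp
  moreover have "(\<Union>n<N. F n) \<subseteq> {0..2}"
  proof -
    have "1 / (real n + 2) + v \<in> {0..2}" if "v \<in> V" for n v
    proof -
      have "0 < 1 / (real n + 2)" "1 / (real n + 2) \<le> 1" by (simp_all add: field_simps)
      moreover have "0 < v" "v < 1" using V that by auto
      ultimately show ?thesis unfolding atLeastAtMost_iff by linarith
    qed
    then show ?thesis unfolding F_def by blast
  qed
  then have "measure lebesgue (\<Union>n<N. F n) \<le> measure lebesgue {0..2::real}"
    using F_fin by (intro measure_mono_fmeasurable) auto
  ultimately show False by simp
qed

lemma rational_transversal_not_measurable:
  fixes V :: "real set"
  assumes V: "V \<subseteq> {0<..<1}"
    and cover: "\<And>x. \<exists>v\<in>V. x - v \<in> \<rat>"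
    and transversal: "\<And>u v. u \<in> V \<Longrightarrow> v \<in> V \<Longrightarrow> u - v \<in> \<rat> \<Longrightarrow> u = v"
  shows "V \<notin> sets lebesgue"
proof
  assume "V \<in> sets lebesgue"
  moreover have "(+) p ` V \<inter> (+) q ` V = {}" if "p \<in> \<rat>" "q \<in> \<rat>" "p \<noteq> q" for p q
  proof -
    have "p + u \<noteq> q + v" if "u \<in> V" "v \<in> V" for u v
      using transversal[OF that] \<open>p \<in> \<rat>\<close> \<open>q \<in> \<rat>\<close> \<open>p \<noteq> q\<close>
      by (metis Rats_diff add_diff_cancel_left' add_diff_cancel_right' diff_add_eq add.commute)
    then show ?thesis by auto
  qed
  ultimately have "negligible V" using V by (intro negligible_if_rational_translates_disjoint)
  then have "negligible (\<Union>q\<in>\<rat>. (+) q ` V)"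
    by (intro negligible_countable_Union countable_image countable_rat) (auto intro: negligible_translation)
  moreover have "UNIV \<subseteq> (\<Union>q\<in>\<rat>. (+) q ` V)"
  proof
    fix x :: real
    obtain v where "v \<in> V" "x - v \<in> \<rat>" using cover by blast
    then show "x \<in> (\<Union>q\<in>\<rat>. (+) q ` V)" by (intro UN_I[of "x - v"]) auto
  qed
  ultimately have "negligible (UNIV :: real set)" by (rule negligible_subset)
  then show False by simp
qed

section \<open>Binary expansions\<close>

definition bin_term :: "(nat \<Rightarrow> bool) \<Rightarrow> nat \<Rightarrow> real" where
  "bin_term w i = (if w i then 1 else 0) / 2 ^ Suc i"

lemma bin_term_nonneg: "0 \<le> bin_term w i"
  by (simp add: bin_term_def)

lemma bin_term_le: "bin_term w i \<le> (1 / 2) ^ Suc i"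
  by (simp add: bin_term_def power_divide del: power_Suc)

lemma summable_bin_term: "summable (bin_term w)"
  by (rule summable_comparison_test'[OF sums_summable[OF power_half_series]])
    (simp add: bin_term_nonneg bin_term_le del: power_Suc)

lemma binval_eq_suminf: "binval w = suminf (bin_term w)"
  unfolding binval_def bin_term_def ..

lemma binval_nonneg: "0 \<le> binval w"
  by (simp add: binval_eq_suminf bin_term_nonneg suminf_nonneg summable_bin_term)

lemma binval_le_1: "binval w \<le> 1"
proof -
  have "suminf (bin_term w) \<le> (\<Sum>i. (1 / 2) ^ Suc i)"
    by (rule suminf_le[OF bin_term_le summable_bin_term sums_summable[OF power_half_series]])
  also have "\<dots> = 1" using power_half_series by (rule sums_unique[symmetric])
  finally show ?thesis by (simp add: binval_eq_suminf)
qed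

lemma binval_pos: "w i \<Longrightarrow> 0 < binval w"
  unfolding binval_eq_suminf
  by (rule suminf_pos2[OF summable_bin_term bin_term_nonneg, of _ i]) (simp add: bin_term_def)

lemma binval_split:
  "binval w = (\<Sum>i<n. bin_term w i) + binval (\<lambda>i. w (i + n)) / 2 ^ n"
proof -
  have "bin_term (\<lambda>i. w (i + n)) = (\<lambda>i. bin_term w (i + n) * 2 ^ n)"
    by (simp add: bin_term_def power_add fun_eq_iff)
  then have "binval (\<lambda>i. w (i + n)) = (\<Sum>i. bin_term w (i + n)) * 2 ^ n"
    unfolding binval_eq_suminf
    by (simp only:) (rule suminf_mult2[symmetric, OF summable_ignore_initial_segment[OF summable_bin_term]])
  then show ?thesis
    using suminf_split_initial_segment[OF summable_bin_term, of w n] by (simp add: binval_eq_suminf)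
qed

lemma finval_map_upt: "finval (map w [0..<n]) = (\<Sum>i<n. bin_term w i)"
  unfolding finval_def bin_term_def by simp

lemma binval_prefix_bounds:
  "binval w \<in> {finval (map w [0..<n]) .. finval (map w [0..<n]) + 1 / 2 ^ n}"
proof -
  have "0 \<le> binval (\<lambda>i. w (i + n)) / 2 ^ n" "binval (\<lambda>i. w (i + n)) / 2 ^ n \<le> 1 / 2 ^ n"
    using binval_nonneg binval_le_1 by (simp_all add: divide_right_mono)
  then show ?thesis using binval_split[of w n] by (simp add: finval_map_upt)
qed

lemma bin_partial_sum_scaled_Ints: "(\<Sum>i<n. bin_term w i) * 2 ^ n \<in> \<int>"
proof (induction n)
  case (Suc n)
  have "(\<Sum>i<Suc n. bin_term w i) * 2 ^ Suc n
      = 2 * ((\<Sum>i<n. bin_term w i) * 2 ^ n) + (if w n then 1 else 0)"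
    by (simp add: bin_term_def algebra_simps)
  then show ?case using Suc by simp
qed simp

text \<open>With infinitely many ones the tail after position n lies in (0,1], which pins the
  n-th partial sum down as the largest dyadic fraction of denominator 2^n below the value.\<close>
lemma bin_partial_sum_eq_ceiling:
  assumes "\<exists>\<^sub>\<infinity>i. w i"
  shows "(\<Sum>i<n. bin_term w i) * 2 ^ n = \<lceil>2 ^ n * binval w\<rceil> - 1"
proof -
  obtain j where "n < j" "w j" using assms INFM_nat by blast
  then have "w ((j - n) + n)" by simp
  then have tail_pos: "0 < binval (\<lambda>i. w (i + n))" by (rule binval_pos)
  obtain z where z: "(\<Sum>i<n. bin_term w i) * 2 ^ n = of_int z"
    by (rule Ints_cases[OF bin_partial_sum_scaled_Ints])
  have "2 ^ n * binval w = of_int z + binval (\<lambda>i. w (i + n))"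
    using binval_split[of w n] z by (simp add: field_simps)
  then have "of_int (z + 1) - 1 < 2 ^ n * binval w" "2 ^ n * binval w \<le> of_int (z + 1)"
    using tail_pos binval_le_1[of "\<lambda>i. w (i + n)"] by simp_all
  then have "\<lceil>2 ^ n * binval w\<rceil> = z + 1" by (rule ceiling_unique)
  then show ?thesis unfolding z by simp
qed

lemma binval_inj:
  assumes "binval w = binval v" "\<exists>\<^sub>\<infinity>i. w i" "\<exists>\<^sub>\<infinity>i. v i"
  shows "w = v"
proof
  fix n
  have sums_eq: "(\<Sum>i<m. bin_term w i) = (\<Sum>i<m. bin_term v i)" for m
  proof -
    have "(\<Sum>i<m. bin_term w i) * 2 ^ m = (\<Sum>i<m. bin_term v i) * 2 ^ m"
      using bin_partial_sum_eq_ceiling[OF assms(2), of m] bin_partial_sum_eq_ceiling[OF assms(3), of m]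
        assms(1) by simp
    then show ?thesis by simp
  qed
  have "bin_term w n = bin_term v n"
    using sums_eq[of n] sums_eq[of "Suc n"] by simp
  then show "w n = v n" by (simp add: bin_term_def split: if_splits)
qed

lemma binval_eq_if_partial_sums_ceiling:
  assumes partial: "\<And>n. (\<Sum>i<n. bin_term w i) = of_int (\<lceil>2 ^ n * y\<rceil> - 1) / 2 ^ n"
  shows "binval w = y" "\<exists>\<^sub>\<infinity>i. w i"
proof -
  define a where "a n = \<lceil>2 ^ n * y\<rceil> - 1" for n :: nat
  have a: "of_int (a n) < 2 ^ n * y" "2 ^ n * y \<le> of_int (a n) + 1" for n
    unfolding a_def by linarith+
  have "(\<lambda>n. of_int (a n) / 2 ^ n) \<longlonglongrightarrow> y"
  proof (rule real_tendsto_sandwich[of "\<lambda>n. y - (1 / 2) ^ n" _ _ "\<lambda>_. y"])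
    have "y - (1 / 2) ^ n \<le> of_int (a n) / 2 ^ n" for n
    proof -
      have "y \<le> (of_int (a n) + 1) / 2 ^ n" using a(2)[of n] by (simp add: field_simps)
      then show ?thesis by (simp add: power_divide add_divide_distrib)
    qed
    then show "\<forall>\<^sub>F n in sequentially. y - (1 / 2) ^ n \<le> of_int (a n) / 2 ^ n"
      by (intro always_eventually) simp
    show "\<forall>\<^sub>F n in sequentially. of_int (a n) / 2 ^ n \<le> y"
      using a(1) by (intro always_eventually) (simp add: field_simps less_imp_le)
    show "(\<lambda>n. y - (1 / 2) ^ n) \<longlonglongrightarrow> y"
      using tendsto_diff[OF tendsto_const LIMSEQ_realpow_zero[of "1 / 2"]] by simp
  qed simp
  then show "binval w = y"
    unfolding binval_eq_suminf using partial by (simp add: a_def sums_def sums_unique[symmetric])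
  show "\<exists>\<^sub>\<infinity>i. w i"
  proof (rule ccontr)
    assume "\<not> (\<exists>\<^sub>\<infinity>i. w i)"
    then obtain N where "\<forall>i\<ge>N. \<not> w i" by (auto simp: INFM_nat_le)
    then have "binval (\<lambda>i. w (i + N)) = 0" by (simp add: binval_def)
    then have "binval w = of_int (a N) / 2 ^ N" using binval_split[of w N] partial by (simp add: a_def)
    then show False using a(1)[of N] \<open>binval w = y\<close> by (simp add: field_simps)
  qed
qed

lemma binval_surj:
  assumes "0 < y" "y \<le> 1"
  shows "\<exists>w. binval w = y \<and> (\<exists>\<^sub>\<infinity>i. w i)"
proof -
  define a where "a n = \<lceil>2 ^ n * y\<rceil> - 1" for n :: nat
  have a: "of_int (a n) < 2 ^ n * y" "2 ^ n * y \<le> of_int (a n) + 1" for n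
    unfolding a_def by linarith+
  define w where "w n \<longleftrightarrow> a (Suc n) = 2 * a n + 1" for n
  have a_Suc: "a (Suc n) = 2 * a n + (if w n then 1 else 0)" for n
  proof -
    have "of_int (2 * a n) < 2 ^ Suc n * y" "2 ^ Suc n * y \<le> of_int (2 * a n) + 2"
      using a[of n] by simp_all
    then have "2 * a n \<le> a (Suc n)" "a (Suc n) \<le> 2 * a n + 1"
      using a[of "Suc n"] by linarith+
    then show ?thesis by (auto simp: w_def)
  qed
  have "(\<Sum>i<n. bin_term w i) = of_int (a n) / 2 ^ n" for n
  proof (induction n)
    case 0
    have "a 0 = 0" unfolding a_def using assms by (simp add: ceiling_eq_iff)
    then show ?case by simp
  next
    case (Suc n)
    then show ?case by (simp add: a_Suc bin_term_def field_simps)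
  qed
  then show ?thesis using binval_eq_if_partial_sums_ceiling[of w y] unfolding a_def by blast
qed

lemma tilde_eqI:
  assumes "binval w = x" "\<exists>\<^sub>\<infinity>i. w i"
  shows "tilde x = w"
  unfolding tilde_def using assms binval_inj by (intro the_equality) auto

lemma binval_tilde:
  assumes "0 < x" "x \<le> 1"
  shows "binval (tilde x) = x"
  using binval_surj[OF assms] tilde_eqI by metis

section \<open>Infinite concatenations\<close>

lemma sum_lessThan_add:
  fixes f :: "nat \<Rightarrow> 'a::comm_monoid_add"
  shows "(\<Sum>i<m + n. f i) = (\<Sum>i<m. f i) + (\<Sum>i<n. f (m + i))"
  by (induction n) (simp_all add: add.assoc)

lemma startpos_Suc: "startpos u (Suc j) = startpos u j + length (u j)"
  unfolding startpos_def by simp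

lemma startpos_const_length: "(\<And>j. length (u j) = k) \<Longrightarrow> startpos u j = j * k"
  unfolding startpos_def by simp

lemma strict_mono_startpos: "(\<And>j. u j \<noteq> []) \<Longrightarrow> strict_mono (startpos u)"
  by (rule strict_monoI_Suc) (simp add: startpos_Suc)

lemma concat_inf_startpos_add:
  assumes "\<And>i. u i \<noteq> []" "t < length (u j)"
  shows "concat_inf u (startpos u j + t) = u j ! t"
proof -
  have "(LEAST i. startpos u j + t < startpos u (Suc i)) = j"
  proof (rule Least_equality)
    show "startpos u j + t < startpos u (Suc j)" using assms(2) by (simp add: startpos_Suc)
  next
    fix i assume less: "startpos u j + t < startpos u (Suc i)"
    show "j \<le> i"
    proof (rule ccontr)
      assume "\<not> j \<le> i"
      then have "startpos u (Suc i) \<le> startpos u j"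
        using strict_mono_less_eq[OF strict_mono_startpos[of u, OF assms(1)], of "Suc i" j] by simp
      then show False using less by simp
    qed
  qed
  then show ?thesis unfolding concat_inf_def Let_def by simp
qed

lemma sum_bin_term_startpos:
  assumes "\<And>j. u j \<noteq> []"
  shows "(\<Sum>i<startpos u n. bin_term (concat_inf u) i) = (\<Sum>j<n. finval (u j) / 2 ^ startpos u j)"
proof (induction n)
  case (Suc n)
  have "(\<Sum>i<startpos u (Suc n). bin_term (concat_inf u) i)
      = (\<Sum>i<startpos u n. bin_term (concat_inf u) i)
        + (\<Sum>t<length (u n). bin_term (concat_inf u) (startpos u n + t))"
    unfolding startpos_Suc by (rule sum_lessThan_add)
  also have "(\<Sum>t<length (u n). bin_term (concat_inf u) (startpos u n + t))
      = (\<Sum>t<length (u n). (if u n ! t then 1 else 0) / 2 ^ Suc t / 2 ^ startpos u n)"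
    by (rule sum.cong) (simp_all add: bin_term_def concat_inf_startpos_add[of u, OF assms] power_add)
  also have "\<dots> = finval (u n) / 2 ^ startpos u n"
    unfolding finval_def by (simp add: sum_divide_distrib)
  finally show ?case using Suc by simp
qed (simp add: startpos_def)

lemma sums_concat_inf:
  assumes "\<And>j. u j \<noteq> []"
  shows "(\<lambda>j. finval (u j) / 2 ^ startpos u j) sums binval (concat_inf u)"
proof -
  have "(\<lambda>n. \<Sum>i<n. bin_term (concat_inf u) i) \<longlonglongrightarrow> binval (concat_inf u)"
    unfolding binval_eq_suminf by (rule summable_LIMSEQ[OF summable_bin_term])
  from LIMSEQ_subseq_LIMSEQ[OF this strict_mono_startpos[of u, OF assms]]
  show ?thesis unfolding sums_def o_def sum_bin_term_startpos[of u, OF assms] .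
qed

lemma concat_val_eq_binval: "(\<And>j. u j \<noteq> []) \<Longrightarrow> concat_val u = binval (concat_inf u)"
  unfolding concat_val_def using sums_concat_inf sums_unique by metis

lemma block_concat_inf:
  assumes "0 < k" "\<And>i. length (u i) = k"
  shows "block k (concat_inf u) j = u j"
proof (rule nth_equalityI)
  have "u i \<noteq> []" for i using assms by (metis length_0_conv less_not_refl)
  moreover have "startpos u j = j * k" using assms(2) by (rule startpos_const_length)
  ultimately show "block k (concat_inf u) j ! t = u j ! t" if "t < length (block k (concat_inf u) j)" for t
    using that concat_inf_startpos_add[of u t j] assms(2) by (simp add: block_def)
qed (simp add: block_def assms(2))

lemma INFM_concat_inf:
  assumes "\<And>i. u i \<noteq> []" "\<exists>\<^sub>\<infinity>j. True \<in> set (u j)"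
  shows "\<exists>\<^sub>\<infinity>n. concat_inf u n"
  unfolding INFM_nat
proof
  fix m
  obtain j where "m < j" "True \<in> set (u j)" using assms(2) by (auto simp: INFM_nat)
  then obtain t where t: "t < length (u j)" "u j ! t" by (metis in_set_conv_nth)
  have "j \<le> startpos u j"
    by (rule strict_mono_imp_increasing[OF strict_mono_startpos[of u, OF assms(1)]])
  then have "m < startpos u j + t" using \<open>m < j\<close> by simp
  moreover have "concat_inf u (startpos u j + t)"
    using concat_inf_startpos_add[of u t j, OF assms(1) t(1)] t(2) by simp
  ultimately show "\<exists>n>m. concat_inf u n" by blast
qed

section \<open>A null set of binary expansions\<close>

lemma map_upt_add: "map w [0..<m + n] = map w [0..<m] @ map (\<lambda>i. w (m + i)) [0..<n]"
  by (induction n) auto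

definition odd_block_prefixes :: "nat \<Rightarrow> bool list \<Rightarrow> nat \<Rightarrow> bool list set" where
  "odd_block_prefixes k we n = {map w [0..<2 * n * k] |w. \<forall>i<n. block k w (2 * i + 1) = we}"

lemma odd_block_prefixes_Suc:
  "odd_block_prefixes k we (Suc n)
     \<subseteq> (\<lambda>(b, p). b @ we @ p) ` ({b. length b = k} \<times> odd_block_prefixes k we n)"
proof
  fix p assume "p \<in> odd_block_prefixes k we (Suc n)"
  then obtain w where p: "p = map w [0..<2 * Suc n * k]"
    and w: "\<forall>i<Suc n. block k w (2 * i + 1) = we"
    unfolding odd_block_prefixes_def by blast
  define w' where "w' i = w (2 * k + i)" for i
  have "block k w' (2 * i + 1) = block k w (2 * Suc i + 1)" for i
    by (simp add: block_def w'_def algebra_simps)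
  then have "\<forall>i<n. block k w' (2 * i + 1) = we" using w by (metis Suc_less_eq)
  then have "map w' [0..<2 * n * k] \<in> odd_block_prefixes k we n"
    unfolding odd_block_prefixes_def by blast
  moreover have "p = map w [0..<k] @ we @ map w' [0..<2 * n * k]"
  proof -
    have "p = map w [0..<k + (k + 2 * n * k)]" unfolding p by (simp add: algebra_simps)
    also have "\<dots> = map w [0..<k] @ map (\<lambda>i. w (k + i)) [0..<k] @ map w' [0..<2 * n * k]"
      unfolding map_upt_add by (simp add: w'_def mult_2 add.assoc)
    also have "map (\<lambda>i. w (k + i)) [0..<k] = we"
      using w[rule_format, of 0] by (simp add: block_def)
    finally show ?thesis .
  qed
  ultimately show "p \<in> (\<lambda>(b, p). b @ we @ p) ` ({b. length b = k} \<times> odd_block_prefixes k we n)"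
    by force
qed

lemma card_odd_block_prefixes:
  "finite (odd_block_prefixes k we n) \<and> card (odd_block_prefixes k we n) \<le> 2 ^ (k * n)"
proof (induction n)
  case 0
  then show ?case by (simp add: odd_block_prefixes_def)
next
  case (Suc n)
  let ?B = "{b :: bool list. length b = k}"
  have B: "finite ?B" "card ?B = 2 ^ k"
    using finite_lists_length_eq[of "UNIV :: bool set" k] card_lists_length_eq[of "UNIV :: bool set" k]
    by simp_all
  let ?image = "(\<lambda>(b, p). b @ we @ p) ` (?B \<times> odd_block_prefixes k we n)"
  have image_finite: "finite ?image" using B Suc by simp
  have image_card: "card ?image \<le> 2 ^ k * card (odd_block_prefixes k we n)"
    using card_image_le[of "?B \<times> odd_block_prefixes k we n"] B Suc by (simp add: card_cartesian_product)
  have "card (odd_block_prefixes k we (Suc n)) \<le> card ?image"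
    by (rule card_mono[OF image_finite odd_block_prefixes_Suc])
  also have "\<dots> \<le> 2 ^ k * 2 ^ (k * n)"
    using image_card Suc by (meson le_trans mult_le_mono2)
  also have "\<dots> = 2 ^ (k * Suc n)" by (simp add: power_add)
  finally show ?case using finite_subset[OF odd_block_prefixes_Suc image_finite] by simp
qed

definition odd_block_cover :: "nat \<Rightarrow> bool list \<Rightarrow> nat \<Rightarrow> real set" where
  "odd_block_cover k we n =
     (\<Union>p\<in>odd_block_prefixes k we n. {finval p .. finval p + 1 / 2 ^ (2 * n * k)})"

lemma binval_in_odd_block_cover:
  assumes "\<forall>i. block k w (2 * i + 1) = we"
  shows "binval w \<in> odd_block_cover k we n"
proof -
  have "map w [0..<2 * n * k] \<in> odd_block_prefixes k we n"
    using assms unfolding odd_block_prefixes_def by blast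
  then show ?thesis unfolding odd_block_cover_def using binval_prefix_bounds[of w "2 * n * k"] by blast
qed

lemma odd_block_cover_lmeasurable: "odd_block_cover k we n \<in> lmeasurable"
  unfolding odd_block_cover_def using card_odd_block_prefixes by (intro fmeasurable.finite_UN) auto

lemma measure_odd_block_cover_le:
  assumes "0 < k"
  shows "measure lebesgue (odd_block_cover k we n) \<le> (1 / 2) ^ n"
proof -
  let ?P = "odd_block_prefixes k we n"
  have "measure lebesgue (odd_block_cover k we n)
      \<le> (\<Sum>p\<in>?P. measure lebesgue {finval p .. finval p + 1 / 2 ^ (2 * n * k)})"
    unfolding odd_block_cover_def using card_odd_block_prefixes by (intro measure_UNION_le) auto
  also have "\<dots> = real (card ?P) * (1 / 2 ^ (2 * n * k))" by simp
  also have "\<dots> \<le> 2 ^ (k * n) * (1 / 2 ^ (2 * n * k))"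
    using card_odd_block_prefixes[of k we n]
    by (simp del: of_nat_power add: of_nat_power[symmetric] divide_right_mono)
  also have "\<dots> = (1 / 2) ^ (k * n)"
  proof -
    have "2 * n * k = k * n + k * n" by simp
    then show ?thesis by (simp only: power_add) (simp add: power_divide)
  qed
  also have "\<dots> \<le> (1 / 2) ^ n"
    using assms by (intro power_decreasing) auto
  finally show ?thesis .
qed

lemma odd_blocks_fixed_null:
  assumes "0 < k"
  shows "{binval w |w. \<forall>i. block k w (2 * i + 1) = we} \<in> null_sets lebesgue"
  unfolding negligible_iff_null_sets[symmetric] negligible_outer_le
proof (intro allI impI)
  fix e :: real
  assume "e > 0"
  then obtain n where "(1 / 2) ^ n < e" using real_arch_pow_inv[of e "1 / 2"] by auto
  then have "measure lebesgue (odd_block_cover k we n) \<le> e"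
    using measure_odd_block_cover_le[OF assms, of we n] by linarith
  then show "\<exists>T. {binval w |w. \<forall>i. block k w (2 * i + 1) = we} \<subseteq> T \<and> T \<in> lmeasurable
      \<and> measure lebesgue T \<le> e"
    using binval_in_odd_block_cover odd_block_cover_lmeasurable
    by (intro exI[of _ "odd_block_cover k we n"]) blast
qed

section \<open>Interleaving with the erased block\<close>

definition interleave :: "(nat \<Rightarrow> 'a) \<Rightarrow> (nat \<Rightarrow> 'a) \<Rightarrow> nat \<Rightarrow> 'a" where
  "interleave u v j = (if even j then u (j div 2) else v (j div 2))"

lemma startpos_interleave_Nil: "startpos (interleave u (\<lambda>_. [])) (2 * i) = startpos u i"
proof (induction i)
  case (Suc i)
  have "2 * Suc i = Suc (Suc (2 * i))" by simp
  then show ?case using Suc by (simp only:) (simp add: startpos_Suc interleave_def)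
qed (simp add: startpos_def)

lemma concat_val_interleave_Nil:
  assumes "\<And>j. u j \<noteq> []"
  shows "concat_val (interleave u (\<lambda>_. [])) = concat_val u"
proof -
  define v where "v = interleave u (\<lambda>_. [])"
  define g where "g j = finval (v j) / 2 ^ startpos v j" for j
  have "(\<lambda>i. g (2 * i)) = (\<lambda>j. finval (u j) / 2 ^ startpos u j)"
    by (simp add: g_def v_def startpos_interleave_Nil interleave_def)
  then have "(\<lambda>i. g (2 * i)) sums binval (concat_inf u)"
    using sums_concat_inf[of u, OF assms] by simp
  moreover have "g j = 0" if "j \<notin> range (\<lambda>i. 2 * i)" for j
  proof -
    have "odd j" using that by (metis dvdE rangeI)
    then show ?thesis by (simp add: g_def v_def interleave_def finval_def)
  qed
  moreover have "strict_mono (\<lambda>i::nat. 2 * i)" by (simp add: strict_mono_def)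
  ultimately have "g sums binval (concat_inf u)" using sums_mono_reindex by blast
  then have "concat_val v = binval (concat_inf u)"
    unfolding concat_val_def g_def by (rule sums_unique[symmetric])
  then show ?thesis using concat_val_eq_binval[of u, OF assms] by (simp add: v_def)
qed

lemma INFM_True_interleave:
  assumes "\<And>i. length (b i) = length we" "\<And>i. b i \<noteq> we"
  shows "\<exists>\<^sub>\<infinity>j. True \<in> set (interleave b (\<lambda>_. we) j)"
  unfolding INFM_nat
proof
  fix m
  have "True \<in> set (b (Suc m)) \<or> True \<in> set we"
    using assms replicate_eqI[of "b (Suc m)" "length we" False] replicate_eqI[of we "length we" False]
    by (metis (full_types))
  then show "\<exists>j>m. True \<in> set (interleave b (\<lambda>_. we) j)"
  proof
    assume "True \<in> set (b (Suc m))"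
    then show ?thesis by (intro exI[of _ "2 * Suc m"]) (simp add: interleave_def)
  next
    assume "True \<in> set we"
    then show ?thesis by (intro exI[of _ "2 * m + 1"]) (simp add: interleave_def)
  qed
qed

definition lift_word :: "bool list \<Rightarrow> (nat \<Rightarrow> bool list) \<Rightarrow> nat \<Rightarrow> bool" where
  "lift_word we b = concat_inf (interleave b (\<lambda>_. we))"

lemma block_lift_word:
  assumes "0 < k" "length we = k" "\<And>i. length (b i) = k"
  shows "block k (lift_word we b) j = interleave b (\<lambda>_. we) j"
  unfolding lift_word_def using assms by (intro block_concat_inf) (auto simp: interleave_def)

lemma f_sigma_lift_word:
  assumes \<sigma>: "erasing_block_subst k \<sigma> we" and "0 < k"
    and b: "\<And>i. length (b i) = k" "\<And>i. \<sigma> (b i) \<noteq> []"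
  shows "f_sigma k \<sigma> we (binval (lift_word we b)) = binval (concat_inf (\<lambda>i. \<sigma> (b i)))"
proof -
  have we: "length we = k" "\<sigma> we = []" using \<sigma> by (simp_all add: erasing_block_subst_def)
  have blocks: "block k (lift_word we b) j = interleave b (\<lambda>_. we) j" for j
    using \<open>0 < k\<close> we(1) b(1) by (rule block_lift_word)
  have "length (interleave b (\<lambda>_. we) j) = k" for j
    using we(1) b(1) by (simp add: interleave_def)
  then have "interleave b (\<lambda>_. we) j \<noteq> []" for j
    using \<open>0 < k\<close> by (metis length_0_conv less_not_refl)
  moreover have "b i \<noteq> we" for i using b(2) we(2) by metis
  ultimately have ones: "\<exists>\<^sub>\<infinity>n. lift_word we b n"
    unfolding lift_word_def using b(1) we(1) by (intro INFM_concat_inf INFM_True_interleave) auto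
  then have "0 < binval (lift_word we b)" using binval_pos INFM_nat by metis
  moreover have "tilde (binval (lift_word we b)) = lift_word we b"
    using ones by (rule tilde_eqI[OF refl])
  moreover have "lift_word we b \<noteq> periodic_word we"
  proof
    assume "lift_word we b = periodic_word we"
    then have "block k (lift_word we b) 0 = we"
      by (auto intro: nth_equalityI simp: block_def periodic_word_def we(1))
    then show False using blocks[of 0] b(2)[of 0] we(2) by (simp add: interleave_def)
  qed
  moreover have "(\<lambda>j. \<sigma> (block k (lift_word we b) j)) = interleave (\<lambda>i. \<sigma> (b i)) (\<lambda>_. [])"
    using blocks we(2) by (simp add: interleave_def fun_eq_iff)
  ultimately have "f_sigma k \<sigma> we (binval (lift_word we b))
      = concat_val (interleave (\<lambda>i. \<sigma> (b i)) (\<lambda>_. []))"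
    using binval_le_1 by (simp add: f_sigma_def)
  also have "\<dots> = binval (concat_inf (\<lambda>i. \<sigma> (b i)))"
    using b(2) by (simp add: concat_val_interleave_Nil concat_val_eq_binval)
  finally show ?thesis .
qed

theorem mainTheorem7:
  fixes k :: nat and \<sigma> :: "bool list \<Rightarrow> bool list" and we :: "bool list"
  assumes "k \<ge> 2"
    and "erasing_block_subst k \<sigma> we"
    and "we \<noteq> replicate k True"
    and "optimal k \<sigma>"
  shows "\<exists>\<Gamma>. \<Gamma> \<subseteq> {0..1} \<and> \<Gamma> \<in> sets lebesgue \<and> emeasure lebesgue \<Gamma> = 0 \<and>
           f_sigma k \<sigma> we ` \<Gamma> \<notin> sets lebesgue"
proof -
  have "0 < k" "length we = k" using assms(1,2) by (simp_all add: erasing_block_subst_def)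
  obtain A where A: "A \<subseteq> {0<..<1::real}" "A \<notin> sets lebesgue"
    using rational_transversal_exists rational_transversal_not_measurable by metis
  have "\<forall>y. \<exists>c. (\<forall>i. length (c i) = k \<and> \<sigma> (c i) \<noteq> []) \<and> tilde y = concat_inf (\<lambda>i. \<sigma> (c i))"
    using assms(4) unfolding optimal_def by blast
  from choice[OF this] obtain b where
    "\<forall>y. (\<forall>i. length (b y i) = k \<and> \<sigma> (b y i) \<noteq> []) \<and> tilde y = concat_inf (\<lambda>i. \<sigma> (b y i))"
    by blast
  then have b: "\<And>y i. length (b y i) = k" "\<And>y i. \<sigma> (b y i) \<noteq> []"
    and tilde_b: "\<And>y. tilde y = concat_inf (\<lambda>i. \<sigma> (b y i))" by simp_all
  define lift where "lift y = binval (lift_word we (b y))" for y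
  have "f_sigma k \<sigma> we (lift y) = y" if "y \<in> A" for y
    using f_sigma_lift_word[OF assms(2) \<open>0 < k\<close> b] binval_tilde[of y] tilde_b[of y] that A(1)
    by (auto simp: lift_def)
  then have "f_sigma k \<sigma> we ` lift ` A = A" by force
  moreover have "lift ` A \<subseteq> {binval w |w. \<forall>i. block k w (2 * i + 1) = we}"
    using block_lift_word[OF \<open>0 < k\<close> \<open>length we = k\<close> b(1)] by (auto simp: lift_def interleave_def)
  then have "lift ` A \<in> null_sets lebesgue"
    by (rule null_sets_completion_subset[OF _ odd_blocks_fixed_null[OF \<open>0 < k\<close>]])
  moreover have "lift ` A \<subseteq> {0..1}" using binval_nonneg binval_le_1 by (auto simp: lift_def)
  ultimately show ?thesis using A(2) by (metis null_setsD1 null_setsD2)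
qed

end
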